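(* Let $T$ be a complete $L$-theory with monster model $\mathcal U$; identify $\phi(a,b)$ with $1$ if it holds and $0$ otherwise. Then $T$ is stable if and only if both of the following hold: (i) for every formula $\phi(x,y)$ and every sequence $(a_i:i<\omega)$ in $\mathcal U$ there are a subsequence $(a_{j_i}:i<\omega)$ and a natural number $N$ such that the sequence $\phi(a_{j_i},y)$ converges pointwise to a function $f$ and $\sum_{i=1}^\infty|\phi(a_{j_i},b)-\phi(a_{j_{i+1}},b)|\le N$ for every $b\in\mathcal U$; (ii) for every formula $\phi(x,y)$ and every sequence $(a_i:i<\omega)$ in $\mathcal U$, if the sequence $\phi(a_i,y)$ converges pointwise to a function $f$ and there is a natural number $N$ with $\sum_{i=1}^\infty|\phi(a_i,b)-\phi(a_{i+1},b)|\le N$ for every $b\in\mathcal U$, then $f$ is continuous.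
   Context: $T$ is stable if no formula $\phi(x,y)$ has the order property, i.e. there are no sequences $(a_i),(b_j)$ in $\mathcal U$ with $\phi(a_i,b_j)\iff i<j$. The functions $\phi(a_i,y)$ are regarded as continuous $\{0,1\}$-valued functions on the Stone space $S_{\tilde\phi}(\{a_i:i<\omega\})$ of complete $\tilde\phi$-types over $\{a_i:i<\omega\}$ (where $\tilde\phi(y,x)=\phi(x,y)$), sending a type $q$ to $1$ iff $\phi(a_i,y)\in q$; convergence and continuity of $f$ refer to this space. *)

theory Defs
  imports "HOL-Analysis.Analysis"
begin

datatype 'f trm = Var nat | Fn 'f "'f trm list"

datatype ('f, 'r) fm =
    Eq "'f trm" "'f trm"
  | Rel 'r "'f trm list"
  | Neg "('f, 'r) fm"
  | Conj "('f, 'r) fm" "('f, 'r) fm"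
  | Ex nat "('f, 'r) fm"

fun fvt :: "'f trm \<Rightarrow> nat set" where
  "fvt (Var n) = {n}"
| "fvt (Fn f ts) = (\<Union>t\<in>set ts. fvt t)"

fun fv :: "('f, 'r) fm \<Rightarrow> nat set" where
  "fv (Eq t s) = fvt t \<union> fvt s"
| "fv (Rel r ts) = (\<Union>t\<in>set ts. fvt t)"
| "fv (Neg \<phi>) = fv \<phi>"
| "fv (Conj \<phi> \<psi>) = fv \<phi> \<union> fv \<psi>"
| "fv (Ex n \<phi>) = fv \<phi> - {n}"

fun evalt :: "('f \<Rightarrow> 'u list \<Rightarrow> 'u) \<Rightarrow> (nat \<Rightarrow> 'u) \<Rightarrow> 'f trm \<Rightarrow> 'u" where
  "evalt F e (Var n) = e n"
| "evalt F e (Fn f ts) = F f (map (evalt F e) ts)"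

fun sat :: "'u set \<Rightarrow> ('f \<Rightarrow> 'u list \<Rightarrow> 'u) \<Rightarrow> ('r \<Rightarrow> 'u list \<Rightarrow> bool)
            \<Rightarrow> (nat \<Rightarrow> 'u) \<Rightarrow> ('f, 'r) fm \<Rightarrow> bool" where
  "sat U F R e (Eq t s) = (evalt F e t = evalt F e s)"
| "sat U F R e (Rel r ts) = R r (map (evalt F e) ts)"
| "sat U F R e (Neg \<phi>) = (\<not> sat U F R e \<phi>)"
| "sat U F R e (Conj \<phi> \<psi>) = (sat U F R e \<phi> \<and> sat U F R e \<psi>)"
| "sat U F R e (Ex n \<phi>) = (\<exists>a\<in>U. sat U F R (e(n := a)) \<phi>)"

definition is_structure :: "'u set \<Rightarrow> ('f \<Rightarrow> 'u list \<Rightarrow> 'u) \<Rightarrow> bool" where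
  "is_structure U F \<longleftrightarrow> U \<noteq> {} \<and> (\<forall>f as. set as \<subseteq> U \<longrightarrow> F f as \<in> U)"

definition sentence :: "('f, 'r) fm \<Rightarrow> bool" where
  "sentence \<phi> \<longleftrightarrow> fv \<phi> = {}"

definition is_model :: "'u set \<Rightarrow> ('f \<Rightarrow> 'u list \<Rightarrow> 'u) \<Rightarrow> ('r \<Rightarrow> 'u list \<Rightarrow> bool)
                        \<Rightarrow> ('f, 'r) fm set \<Rightarrow> bool" where
  "is_model U F R T \<longleftrightarrow> is_structure U F \<and>
     (\<forall>\<sigma>\<in>T. sentence \<sigma> \<and> (\<forall>e. range e \<subseteq> U \<longrightarrow> sat U F R e \<sigma>))"

definition complete_theory :: "('f, 'r) fm set \<Rightarrow> bool" where
  "complete_theory T \<longleftrightarrow> (\<forall>\<sigma>\<in>T. sentence \<sigma>) \<and>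
     (\<forall>\<sigma>. sentence \<sigma> \<longrightarrow> \<sigma> \<in> T \<or> Neg \<sigma> \<in> T) \<and>
     \<not> (\<exists>\<sigma>. \<sigma> \<in> T \<and> Neg \<sigma> \<in> T)"

text \<open>Evaluating a formula at a tuple of parameters: variable i receives the i-th
  entry of the list (other variables receive a fixed default element of U).\<close>
definition env :: "'u set \<Rightarrow> 'u list \<Rightarrow> nat \<Rightarrow> 'u" where
  "env U ps = (\<lambda>i. if i < length ps then ps ! i else (SOME u. u \<in> U))"

definition holds :: "'u set \<Rightarrow> ('f \<Rightarrow> 'u list \<Rightarrow> 'u) \<Rightarrow> ('r \<Rightarrow> 'u list \<Rightarrow> bool)
                     \<Rightarrow> ('f, 'r) fm \<Rightarrow> 'u list \<Rightarrow> bool" where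
  "holds U F R \<phi> ps = sat U F R (env U ps) \<phi>"

text \<open>Monster model of T: a model of T which is kappa-saturated for
  kappa = (|L| + aleph_0)^+: every finitely satisfiable 1-type over a parameter set A
  of size at most |L| + aleph_0 is realized. A 1-type over A is a set of pairs
  (psi, ps) standing for psi(x, ps), with x = variable 0 and ps (from A) assigned to
  variables 1, ..., length ps.\<close>
definition monster :: "'u set \<Rightarrow> ('f \<Rightarrow> 'u list \<Rightarrow> 'u) \<Rightarrow> ('r \<Rightarrow> 'u list \<Rightarrow> bool)
                       \<Rightarrow> ('f, 'r) fm set \<Rightarrow> bool" where
  "monster U F R T \<longleftrightarrow> is_model U F R T \<and>
     (\<forall>A \<Sigma>. A \<subseteq> U \<and> (\<exists>g :: 'f + 'r + nat \<Rightarrow> 'u. A \<subseteq> range g)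
        \<and> \<Sigma> \<subseteq> {(\<psi>, ps). set ps \<subseteq> A \<and> fv \<psi> \<subseteq> {..< Suc (length ps)}}
        \<and> (\<forall>\<Sigma>0 \<subseteq> \<Sigma>. finite \<Sigma>0 \<longrightarrow> (\<exists>c\<in>U. \<forall>(\<psi>, ps)\<in>\<Sigma>0. holds U F R \<psi> (c # ps)))
      \<longrightarrow> (\<exists>c\<in>U. \<forall>(\<psi>, ps)\<in>\<Sigma>. holds U F R \<psi> (c # ps)))"

text \<open>A formula phi(x,y) with |x| = n, |y| = m is a formula with free variables among
  0..n+m-1, where x = (0..n-1) and y = (n..n+m-1); phi(a,b) is holds phi (a @ b).\<close>
definition order_property :: "'u set \<Rightarrow> ('f \<Rightarrow> 'u list \<Rightarrow> 'u) \<Rightarrow> ('r \<Rightarrow> 'u list \<Rightarrow> bool)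
                              \<Rightarrow> ('f, 'r) fm \<Rightarrow> nat \<Rightarrow> nat \<Rightarrow> bool" where
  "order_property U F R \<phi> n m \<longleftrightarrow>
     (\<exists>a b :: nat \<Rightarrow> 'u list.
        (\<forall>i. set (a i) \<subseteq> U \<and> length (a i) = n) \<and>
        (\<forall>j. set (b j) \<subseteq> U \<and> length (b j) = m) \<and>
        (\<forall>i j. holds U F R \<phi> (a i @ b j) \<longleftrightarrow> i < j))"

definition stable :: "'u set \<Rightarrow> ('f \<Rightarrow> 'u list \<Rightarrow> 'u) \<Rightarrow> ('r \<Rightarrow> 'u list \<Rightarrow> bool) \<Rightarrow> bool" where
  "stable U F R \<longleftrightarrow>
     \<not> (\<exists>\<phi> n m. fv \<phi> \<subseteq> {..< n + m} \<and> order_property U F R \<phi> n m)"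

text \<open>A complete phi~-type q over {a_i} is represented by the function
  i \<mapsto> [phi(a_i, y) \<in> q]; these are exactly the functions all of whose finite
  restrictions are realized in U.\<close>
definition phi_types :: "'u set \<Rightarrow> ('f \<Rightarrow> 'u list \<Rightarrow> 'u) \<Rightarrow> ('r \<Rightarrow> 'u list \<Rightarrow> bool)
                         \<Rightarrow> ('f, 'r) fm \<Rightarrow> nat \<Rightarrow> (nat \<Rightarrow> 'u list) \<Rightarrow> (nat \<Rightarrow> bool) set" where
  "phi_types U F R \<phi> m a = {p. \<forall>I. finite I \<longrightarrow>
      (\<exists>b. set b \<subseteq> U \<and> length b = m \<and> (\<forall>i\<in>I. holds U F R \<phi> (a i @ b) = p i))}"

definition stone_top :: "'u set \<Rightarrow> ('f \<Rightarrow> 'u list \<Rightarrow> 'u) \<Rightarrow> ('r \<Rightarrow> 'u list \<Rightarrow> bool)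
                         \<Rightarrow> ('f, 'r) fm \<Rightarrow> nat \<Rightarrow> (nat \<Rightarrow> 'u list) \<Rightarrow> (nat \<Rightarrow> bool) topology" where
  "stone_top U F R \<phi> m a =
     subtopology (product_topology (\<lambda>_. discrete_topology UNIV) UNIV) (phi_types U F R \<phi> m a)"

end

(*
  Stability gives a bound K on the size of finite half graphs of phi: otherwise saturation of
  the monster model builds an infinite one, i.e. the order property. For (i), colour the
  2K-element sets of indices by whether some b realizes the alternating pattern
  phi(a_x, b) <-> "x has even rank" on them, and pass to a homogeneous subsequence by Ramsey's
  theorem. If every 2K-set alternates, a half graph of size K appears; so none does, and then
  phi(a_i, b) changes its value at most 2K times along the subsequence, for every b. This gives
  both pointwise convergence and the bound on the variation. For (ii), a pointwise limit f is
  locally constant on the space of phi-types: otherwise there are types q_t and indices x_s with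
  q_t(x_s) <-> s <= t, and realizing the q_t produces the order property for phi or its
  negation. Conversely, along an order property a_i, b_k the types "i < k" converge to the type
  "true everywhere", while a pointwise limit f takes the value 0 on the former and 1 on the
  latter, so f is not continuous.
*)

theory Submission
  imports Defs "HOL-Library.Ramsey"
begin

section \<open>Renaming variables and coding sequences of tuples\<close>

fun rename_trm :: "(nat \<Rightarrow> nat) \<Rightarrow> 'f trm \<Rightarrow> 'f trm" where
  "rename_trm \<pi> (Var n) = Var (\<pi> n)"
| "rename_trm \<pi> (Fn f ts) = Fn f (map (rename_trm \<pi>) ts)"

fun rename :: "(nat \<Rightarrow> nat) \<Rightarrow> ('f, 'r) fm \<Rightarrow> ('f, 'r) fm" where
  "rename \<pi> (Eq t s) = Eq (rename_trm \<pi> t) (rename_trm \<pi> s)"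
| "rename \<pi> (Rel r ts) = Rel r (map (rename_trm \<pi>) ts)"
| "rename \<pi> (Neg \<phi>) = Neg (rename \<pi> \<phi>)"
| "rename \<pi> (Conj \<phi> \<psi>) = Conj (rename \<pi> \<phi>) (rename \<pi> \<psi>)"
| "rename \<pi> (Ex n \<phi>) = Ex (\<pi> n) (rename \<pi> \<phi>)"

lemma evalt_rename_trm: "evalt F e (rename_trm \<pi> t) = evalt F (e \<circ> \<pi>) t"
  by (induction t) (auto cong: map_cong)

lemma sat_rename: "inj \<pi> \<Longrightarrow> sat U F R e (rename \<pi> \<phi>) = sat U F R (e \<circ> \<pi>) \<phi>"
proof (induction \<phi> arbitrary: e)
  case (Ex n \<phi>)
  have "(e(\<pi> n := a)) \<circ> \<pi> = (e \<circ> \<pi>)(n := a)" for a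
    using Ex.prems by (auto simp: fun_eq_iff inj_eq)
  then show ?case by (simp only: rename.simps sat.simps Ex.IH[OF Ex.prems])
qed (auto simp: evalt_rename_trm comp_def)

lemma evalt_cong: "\<forall>u\<in>fvt t. e u = e' u \<Longrightarrow> evalt F e t = evalt F e' t"
  by (induction t) (auto cong: map_cong)

lemma sat_cong: "\<forall>u\<in>fv \<phi>. e u = e' u \<Longrightarrow> sat U F R e \<phi> = sat U F R e' \<phi>"
proof (induction \<phi> arbitrary: e e')
  case (Eq t s)
  then show ?case using evalt_cong[of t e e' F] evalt_cong[of s e e' F] by simp
next
  case (Rel r ts)
  then have "map (evalt F e) ts = map (evalt F e') ts"
    by (auto intro!: evalt_cong)
  then show ?case by (simp only: sat.simps)
next
  case (Ex n \<phi>)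
  then have "sat U F R (e(n := a)) \<phi> = sat U F R (e'(n := a)) \<phi>" for a
    by auto
  then show ?case by simp
next
  case (Conj \<phi> \<psi>)
  then have "sat U F R e \<phi> = sat U F R e' \<phi>" "sat U F R e \<psi> = sat U F R e' \<psi>"
    by auto
  then show ?case by simp
qed simp

lemma finite_fvt: "finite (fvt t)"
  by (induction t) auto

lemma finite_fv: "finite (fv \<phi>)"
  by (induction \<phi>) (auto simp: finite_fvt)

lemma holds_Neg: "holds U F R (Neg \<phi>) ps \<longleftrightarrow> \<not> holds U F R \<phi> ps"
  by (simp add: holds_def)

lemma holds_Cons_map:
  assumes "fv \<phi> \<subseteq> {..k}"
  shows "holds U F R \<phi> (c # map E [1..<Suc k]) = sat U F R (E(0 := c)) \<phi>"
  unfolding holds_def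
proof (rule sat_cong, rule ballI)
  fix u assume "u \<in> fv \<phi>"
  then have "u \<le> k" using assms by auto
  then show "env U (c # map E [1..<Suc k]) u = (E(0 := c)) u"
    by (cases u) (auto simp: env_def simp del: upt_Suc)
qed

(* An assignment codes countably many tuples at once: variable xvar i c carries the c-th
   coordinate of x_i and yvar j c that of y_j. Variables congruent to 2 mod 3 are left free, so
   that pair_vars, which renames phi(x, y) into phi(x_i, y_j), is injective. *)
definition xvar :: "nat \<Rightarrow> nat \<Rightarrow> nat" where
  "xvar i c = 3 * prod_encode (i, c)"

definition yvar :: "nat \<Rightarrow> nat \<Rightarrow> nat" where
  "yvar j c = 3 * prod_encode (j, c) + 1"

definition pair_vars :: "nat \<Rightarrow> nat \<Rightarrow> nat \<Rightarrow> nat \<Rightarrow> nat \<Rightarrow> nat" where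
  "pair_vars n m i j u =
     (if u < n then xvar i u else if u < n + m then yvar j (u - n) else 3 * u + 2)"

definition assign_tuples :: "(nat \<Rightarrow> 'u) \<Rightarrow> (nat \<Rightarrow> 'u list) \<Rightarrow> (nat \<Rightarrow> 'u list) \<Rightarrow> nat \<Rightarrow> 'u" where
  "assign_tuples E a b u = (case prod_decode (u div 3) of (i, c) \<Rightarrow>
     if u mod 3 = 0 \<and> c < length (a i) then a i ! c
     else if u mod 3 = 1 \<and> c < length (b i) then b i ! c else E u)"

lemma xvar_eq_iff [simp]: "xvar i c = xvar i' c' \<longleftrightarrow> i = i' \<and> c = c'"
  by (auto simp: xvar_def)

lemma yvar_eq_iff [simp]: "yvar j c = yvar j' c' \<longleftrightarrow> j = j' \<and> c = c'"
  by (auto simp: yvar_def)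

lemma xvar_neq_yvar [simp]: "xvar i c \<noteq> yvar j c'" "yvar j c' \<noteq> xvar i c"
  unfolding xvar_def yvar_def by presburger+

lemma inj_pair_vars: "inj (pair_vars n m i j)"
  unfolding inj_def pair_vars_def xvar_def yvar_def by (auto split: if_splits) presburger+

lemma assign_tuples_xvar: "c < length (a i) \<Longrightarrow> assign_tuples E a b (xvar i c) = a i ! c"
  by (simp add: assign_tuples_def xvar_def)

lemma assign_tuples_yvar:
  assumes "c < length (b j)"
  shows "assign_tuples E a b (yvar j c) = b j ! c"
proof -
  have "yvar j c div 3 = prod_encode (j, c)" "yvar j c mod 3 = 1"
    unfolding yvar_def by simp_all
  with assms show ?thesis
    by (simp add: assign_tuples_def)
qed

lemma assign_tuples_other:
  assumes "\<And>i c. c < length (a i) \<Longrightarrow> u \<noteq> xvar i c"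
    and "\<And>j c. c < length (b j) \<Longrightarrow> u \<noteq> yvar j c"
  shows "assign_tuples E a b u = E u"
proof -
  obtain i c where ic: "prod_decode (u div 3) = (i, c)"
    by (cases "prod_decode (u div 3)")
  then have "u div 3 = prod_encode (i, c)"
    by (metis prod_decode_inverse)
  then have "u mod 3 = 0 \<Longrightarrow> u = xvar i c" "u mod 3 = 1 \<Longrightarrow> u = yvar i c"
    unfolding xvar_def yvar_def by presburger+
  with assms show ?thesis
    by (auto simp: assign_tuples_def ic)
qed

lemma range_assign_tuples:
  assumes "range E \<subseteq> U" "\<And>i. set (a i) \<subseteq> U" "\<And>j. set (b j) \<subseteq> U"
  shows "range (assign_tuples E a b) \<subseteq> U"
proof (rule image_subsetI)
  fix u
  have "E u \<in> U" "\<And>i c. c < length (a i) \<Longrightarrow> a i ! c \<in> U" "\<And>j c. c < length (b j) \<Longrightarrow> b j ! c \<in> U"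
    using assms nth_mem by blast+
  then show "assign_tuples E a b u \<in> U"
    by (simp add: assign_tuples_def split: prod.split)
qed

lemma sat_pair_vars:
  assumes "fv \<phi> \<subseteq> {..<n + m}" "length as = n" "length bs = m"
    and "\<And>c. c < n \<Longrightarrow> E (xvar i c) = as ! c" "\<And>c. c < m \<Longrightarrow> E (yvar j c) = bs ! c"
  shows "sat U F R (E \<circ> pair_vars n m i j) \<phi> = holds U F R \<phi> (as @ bs)"
  unfolding holds_def
proof (rule sat_cong, rule ballI)
  fix u assume "u \<in> fv \<phi>"
  then have "u < n + m" using assms(1) by auto
  with assms(2-) show "(E \<circ> pair_vars n m i j) u = env U (as @ bs) u"
    by (simp add: pair_vars_def env_def nth_append)
qed

section \<open>Definable conditions and saturation\<close>

locale monster_model =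
  fixes U :: "'u set" and F :: "'f \<Rightarrow> 'u list \<Rightarrow> 'u" and R :: "'r \<Rightarrow> 'u list \<Rightarrow> bool"
    and T :: "('f, 'r) fm set"
  assumes monster: "monster U F R T"
begin

definition definable :: "((nat \<Rightarrow> 'u) \<Rightarrow> bool) \<Rightarrow> bool" where
  "definable Q \<longleftrightarrow> (\<exists>\<theta>. \<forall>E. range E \<subseteq> U \<longrightarrow> (sat U F R E \<theta> \<longleftrightarrow> Q E))"

definition variant :: "nat set \<Rightarrow> (nat \<Rightarrow> 'u) \<Rightarrow> (nat \<Rightarrow> 'u) \<Rightarrow> bool" where
  "variant V E E' \<longleftrightarrow> range E' \<subseteq> U \<and> (\<forall>u. u \<notin> V \<longrightarrow> E' u = E u)"

lemma universe_nonempty: "U \<noteq> {}"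
  using monster unfolding monster_def is_model_def is_structure_def by auto

lemma definable_sat: "definable (\<lambda>E. sat U F R E \<theta>)"
  unfolding definable_def by blast

lemma definable_cong: "definable P \<Longrightarrow> (\<And>E. range E \<subseteq> U \<Longrightarrow> P E \<longleftrightarrow> Q E) \<Longrightarrow> definable Q"
  unfolding definable_def by metis

lemma definable_not: "definable P \<Longrightarrow> definable (\<lambda>E. \<not> P E)"
  unfolding definable_def by (metis sat.simps(3))

lemma definable_conj: "definable P \<Longrightarrow> definable Q \<Longrightarrow> definable (\<lambda>E. P E \<and> Q E)"
  unfolding definable_def by (metis sat.simps(4))

lemma definable_iff_const: "definable P \<Longrightarrow> definable (\<lambda>E. P E \<longleftrightarrow> v)"
  by (cases v) (auto intro: definable_cong[OF definable_not])

lemma definable_Ball: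
  assumes "finite I" "\<And>i. i \<in> I \<Longrightarrow> definable (Q i)"
  shows "definable (\<lambda>E. \<forall>i\<in>I. Q i E)"
  using assms
proof (induction I rule: finite_induct)
  case empty
  show ?case
    using definable_sat[of "Eq (Var 0) (Var 0)"] by (simp add: definable_cong)
next
  case (insert x I)
  then show ?case by (simp add: definable_conj)
qed

lemma definable_rename:
  assumes "inj \<pi>" "definable Q"
  shows "definable (\<lambda>E. Q (E \<circ> \<pi>))"
proof -
  obtain \<theta> where "\<forall>E. range E \<subseteq> U \<longrightarrow> (sat U F R E \<theta> \<longleftrightarrow> Q E)"
    using assms(2) unfolding definable_def by blast
  then have "\<forall>E. range E \<subseteq> U \<longrightarrow> (sat U F R E (rename \<pi> \<theta>) \<longleftrightarrow> Q (E \<circ> \<pi>))"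
    by (auto simp: sat_rename[OF assms(1)] image_subset_iff)
  then show ?thesis
    unfolding definable_def by blast
qed

lemma definable_Ex_var:
  assumes "definable Q"
  shows "definable (\<lambda>E. \<exists>c\<in>U. Q (E(v := c)))"
proof -
  obtain \<theta> where "\<forall>E. range E \<subseteq> U \<longrightarrow> (sat U F R E \<theta> \<longleftrightarrow> Q E)"
    using assms unfolding definable_def by blast
  then have "\<forall>E. range E \<subseteq> U \<longrightarrow> (sat U F R E (Ex v \<theta>) \<longleftrightarrow> (\<exists>c\<in>U. Q (E(v := c))))"
    by (auto simp: image_subset_iff)
  then show ?thesis
    unfolding definable_def by blast
qed

lemma monster_saturated:
  assumes "A \<subseteq> U" "\<exists>g :: 'f + 'r + nat \<Rightarrow> 'u. A \<subseteq> range g"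
    and "\<Sigma> \<subseteq> {(\<psi>, ps). set ps \<subseteq> A \<and> fv \<psi> \<subseteq> {..< Suc (length ps)}}"
    and "\<And>\<Sigma>0. \<Sigma>0 \<subseteq> \<Sigma> \<Longrightarrow> finite \<Sigma>0 \<Longrightarrow> \<exists>c\<in>U. \<forall>(\<psi>, ps)\<in>\<Sigma>0. holds U F R \<psi> (c # ps)"
  shows "\<exists>c\<in>U. \<forall>(\<psi>, ps)\<in>\<Sigma>. holds U F R \<psi> (c # ps)"
  using monster assms unfolding monster_def by blast

lemma realize_var0:
  assumes E: "range E \<subseteq> U"
    and finsat: "\<And>\<Theta>0. \<Theta>0 \<subseteq> \<Theta> \<Longrightarrow> finite \<Theta>0 \<Longrightarrow> \<exists>c\<in>U. \<forall>\<theta>\<in>\<Theta>0. sat U F R (E(0 := c)) \<theta>"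
  shows "\<exists>c\<in>U. \<forall>\<theta>\<in>\<Theta>. sat U F R (E(0 := c)) \<theta>"
proof -
  define params where "params \<theta> = map E [1..<Suc (Max (insert 0 (fv \<theta>)))]" for \<theta> :: "('f, 'r) fm"
  have fv_params: "fv \<theta> \<subseteq> {..Max (insert 0 (fv \<theta>))}" for \<theta> :: "('f, 'r) fm"
    by (auto simp: finite_fv)
  have holds_params: "holds U F R \<theta> (c # params \<theta>) = sat U F R (E(0 := c)) \<theta>" for \<theta> c
    unfolding params_def using fv_params by (rule holds_Cons_map)
  define \<Sigma> where "\<Sigma> = (\<lambda>\<theta>. (\<theta>, params \<theta>)) ` \<Theta>"
  have \<Sigma>_params: "\<Sigma> \<subseteq> {(\<psi>, ps). set ps \<subseteq> range E \<and> fv \<psi> \<subseteq> {..< Suc (length ps)}}"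
    using fv_params by (fastforce simp: \<Sigma>_def params_def)
  have \<Sigma>_finsat: "\<exists>c\<in>U. \<forall>(\<psi>, ps)\<in>\<Sigma>0. holds U F R \<psi> (c # ps)"
    if sub: "\<Sigma>0 \<subseteq> \<Sigma>" "finite \<Sigma>0" for \<Sigma>0
  proof -
    obtain \<Theta>0 where "\<Theta>0 \<subseteq> \<Theta>" "finite \<Theta>0" "\<Sigma>0 = (\<lambda>\<theta>. (\<theta>, params \<theta>)) ` \<Theta>0"
      using finite_subset_image[OF sub(2) sub(1)[unfolded \<Sigma>_def]] by blast
    then show ?thesis
      using finsat holds_params by fastforce
  qed
  \<comment> \<open>the parameter set is countable, hence of size at most |L| + aleph_0\<close>
  have small: "\<exists>g :: 'f + 'r + nat \<Rightarrow> 'u. range E \<subseteq> range g"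
    by (rule exI[of _ "case_sum (\<lambda>_. E 0) (case_sum (\<lambda>_. E 0) E)"])
      (auto intro!: image_eqI[where x = "Inr (Inr _)"])
  obtain c where "c \<in> U" "\<forall>(\<psi>, ps)\<in>\<Sigma>. holds U F R \<psi> (c # ps)"
    using monster_saturated[OF E small \<Sigma>_params \<Sigma>_finsat] by blast
  then show ?thesis
    using holds_params by (auto simp: \<Sigma>_def)
qed

lemma realize_var:
  assumes E: "range E \<subseteq> U" and defin: "\<And>S. S \<in> SS \<Longrightarrow> definable S"
    and finsat: "\<And>SS0. SS0 \<subseteq> SS \<Longrightarrow> finite SS0 \<Longrightarrow> \<exists>c\<in>U. \<forall>S\<in>SS0. S (E(v := c))"
  shows "\<exists>c\<in>U. \<forall>S\<in>SS. S (E(v := c))"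
proof -
  define \<pi> where "\<pi> = id(v := 0, 0 := v)"
  have "inj \<pi>"
    unfolding \<pi>_def inj_def by auto
  have swap: "(E \<circ> \<pi>)(0 := c) \<circ> \<pi> = E(v := c)" for c
    by (auto simp: \<pi>_def)
  have "\<exists>\<theta>. \<forall>S\<in>SS. \<forall>E. range E \<subseteq> U \<longrightarrow> (sat U F R E (\<theta> S) \<longleftrightarrow> S E)"
    using defin unfolding definable_def by (intro bchoice) blast
  then obtain \<theta> where \<theta>: "\<forall>S\<in>SS. \<forall>E. range E \<subseteq> U \<longrightarrow> (sat U F R E (\<theta> S) \<longleftrightarrow> S E)" ..
  have sat_\<theta>: "sat U F R ((E \<circ> \<pi>)(0 := c)) (rename \<pi> (\<theta> S)) \<longleftrightarrow> S (E(v := c))"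
    if S: "S \<in> SS" and c: "c \<in> U" for S c
  proof -
    have "range (E(v := c)) \<subseteq> U"
      using E c by auto
    then have "sat U F R (E(v := c)) (\<theta> S) \<longleftrightarrow> S (E(v := c))"
      using \<theta> S by blast
    then show ?thesis
      by (simp add: sat_rename[OF \<open>inj \<pi>\<close>] swap)
  qed
  have "range (E \<circ> \<pi>) \<subseteq> U"
    using E by auto
  then obtain c where c: "c \<in> U" "\<forall>\<theta>'\<in>(\<lambda>S. rename \<pi> (\<theta> S)) ` SS. sat U F R ((E \<circ> \<pi>)(0 := c)) \<theta>'"
  proof (rule realize_var0[THEN bexE])
    fix \<Theta>0 assume "\<Theta>0 \<subseteq> (\<lambda>S. rename \<pi> (\<theta> S)) ` SS" "finite \<Theta>0"
    then obtain SS0 where SS0: "SS0 \<subseteq> SS" "finite SS0" "\<Theta>0 = (\<lambda>S. rename \<pi> (\<theta> S)) ` SS0"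
      by (meson finite_subset_image)
    obtain c where c: "c \<in> U" "\<forall>S\<in>SS0. S (E(v := c))"
      using finsat[OF SS0(1,2)] by blast
    have "\<forall>\<theta>'\<in>\<Theta>0. sat U F R ((E \<circ> \<pi>)(0 := c)) \<theta>'"
      unfolding SS0(3) using c SS0(1) sat_\<theta> by blast
    with c(1) show "\<exists>c\<in>U. \<forall>\<theta>'\<in>\<Theta>0. sat U F R ((E \<circ> \<pi>)(0 := c)) \<theta>'" ..
  qed
  have "\<forall>S\<in>SS. S (E(v := c))"
    using c sat_\<theta> by blast
  with c(1) show ?thesis ..
qed

lemma variant_empty_iff: "variant {} E E' \<longleftrightarrow> range E \<subseteq> U \<and> E' = E"
  by (auto simp: variant_def)

lemma variant_insert_iff:
  "variant (insert w V) E E' \<longleftrightarrow> E' w \<in> U \<and> variant V (E(w := E' w)) E'"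
  unfolding variant_def by auto

lemma variant_update: "variant V (E(w := c)) E' \<Longrightarrow> variant (insert w V) E E'"
  by (auto simp: variant_def)

lemma definable_Ex_variant:
  assumes "finite V" "definable Q"
  shows "definable (\<lambda>E. \<exists>E'. variant V E E' \<and> Q E')"
  using assms(1)
proof (induction V rule: finite_induct)
  case empty
  from assms(2) show ?case
    by (rule definable_cong) (auto simp: variant_empty_iff)
next
  case (insert w V)
  have "definable (\<lambda>E. \<exists>c\<in>U. \<exists>E'. variant V (E(w := c)) E' \<and> Q E')"
    using definable_Ex_var[OF insert.IH] .
  then show ?case
  proof (rule definable_cong)
    fix E :: "nat \<Rightarrow> 'u"
    show "(\<exists>c\<in>U. \<exists>E'. variant V (E(w := c)) E' \<and> Q E') \<longleftrightarrow> (\<exists>E'. variant (insert w V) E E' \<and> Q E')"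
      by (meson variant_insert_iff variant_update)
  qed
qed

lemma realize_vars:
  assumes "finite V" "range E \<subseteq> U" "\<And>S. S \<in> SS \<Longrightarrow> definable S"
    and "\<And>SS0. SS0 \<subseteq> SS \<Longrightarrow> finite SS0 \<Longrightarrow> \<exists>E'. variant V E E' \<and> (\<forall>S\<in>SS0. S E')"
  shows "\<exists>E'. variant V E E' \<and> (\<forall>S\<in>SS. S E')"
  using assms
proof (induction V arbitrary: E rule: finite_induct)
  case empty
  then have "S E" if "S \<in> SS" for S
    using empty.prems(3)[of "{S}"] that by (auto simp: variant_empty_iff)
  with empty.prems(1) show ?case
    by (auto simp: variant_empty_iff)
next
  case (insert v V)
  define Q where "Q SS0 = (\<lambda>E. \<exists>E'. variant V E E' \<and> (\<forall>S\<in>SS0. S E'))" for SS0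
  define QQ where "QQ = Q ` {SS0. SS0 \<subseteq> SS \<and> finite SS0}"
  have defin_QQ: "definable S" if S: "S \<in> QQ" for S
  proof -
    obtain SS0 where SS0: "SS0 \<subseteq> SS" "finite SS0" "S = Q SS0"
      using S unfolding QQ_def by (auto elim!: imageE)
    have "definable (\<lambda>E. \<forall>S\<in>SS0. S E)"
      using SS0 insert.prems(2) by (intro definable_Ball) auto
    then show ?thesis
      unfolding SS0(3) Q_def by (rule definable_Ex_variant[OF insert.hyps(1)])
  qed
  have finsat_QQ: "\<exists>c\<in>U. \<forall>S\<in>QQ0. S (E(v := c))" if sub: "QQ0 \<subseteq> QQ" "finite QQ0" for QQ0
  proof -
    obtain C where C: "C \<subseteq> {SS0. SS0 \<subseteq> SS \<and> finite SS0}" "finite C" "QQ0 = Q ` C"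
      using finite_subset_image[OF sub(2) sub(1)[unfolded QQ_def]] by blast
    then have C_sub: "\<Union>C \<subseteq> SS" "finite (\<Union>C)"
      by auto
    obtain E' where "variant (insert v V) E E'" "\<forall>S\<in>\<Union>C. S E'"
      using insert.prems(3)[OF C_sub] by blast
    then have "E' v \<in> U" "\<forall>S\<in>QQ0. S (E(v := E' v))"
      using C(3) unfolding variant_insert_iff Q_def by auto
    then show ?thesis ..
  qed
  obtain c where c: "c \<in> U" "\<forall>S\<in>QQ. S (E(v := c))"
    using realize_var[OF insert.prems(1) defin_QQ finsat_QQ] by blast
  have "\<exists>E'. variant V (E(v := c)) E' \<and> (\<forall>S\<in>SS. S E')"
  proof (rule insert.IH)
    show "range (E(v := c)) \<subseteq> U"
      using insert.prems(1) c(1) by auto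
    show "\<exists>E'. variant V (E(v := c)) E' \<and> (\<forall>S\<in>SS0. S E')" if "SS0 \<subseteq> SS" "finite SS0" for SS0
    proof -
      have "Q SS0 \<in> QQ"
        using that unfolding QQ_def by (intro imageI) simp
      then have "Q SS0 (E(v := c))"
        by (rule bspec[OF c(2)])
      then show ?thesis
        unfolding Q_def .
    qed
  qed (fact insert.prems(2))
  then show ?case
    by (metis variant_update)
qed

lemma definable_pair_vars: "definable (\<lambda>E. sat U F R (E \<circ> pair_vars n m i j) \<phi> \<longleftrightarrow> v)"
  by (rule definable_iff_const, rule definable_rename[OF inj_pair_vars definable_sat])

lemma phi_type_realized:
  assumes fv: "fv \<phi> \<subseteq> {..<n + m}" and a: "\<forall>i. set (a i) \<subseteq> U \<and> length (a i) = n"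
    and p: "p \<in> phi_types U F R \<phi> m a"
  shows "\<exists>b. set b \<subseteq> U \<and> length b = m \<and> (\<forall>i. holds U F R \<phi> (a i @ b) = p i)"
proof -
  obtain d where d: "d \<in> U"
    using universe_nonempty by blast
  define E0 where "E0 = assign_tuples (\<lambda>_. d) a (\<lambda>_. [])"
  define V where "V = yvar 0 ` {..<m}"
  define S where "S i = (\<lambda>E. sat U F R (E \<circ> pair_vars n m i 0) \<phi> \<longleftrightarrow> p i)" for i
  define y where "y E = map (\<lambda>c. E (yvar 0 c)) [0..<m]" for E :: "nat \<Rightarrow> 'u"
  have E0: "range E0 \<subseteq> U"
    unfolding E0_def using a d by (intro range_assign_tuples) auto
  have S_iff: "S i E \<longleftrightarrow> (holds U F R \<phi> (a i @ y E) \<longleftrightarrow> p i)" if "variant V E0 E" for E i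
  proof -
    have "E (xvar i c) = a i ! c" if "c < n" for c
    proof -
      have "xvar i c \<notin> V"
        by (auto simp: V_def)
      then have "E (xvar i c) = E0 (xvar i c)"
        using \<open>variant V E0 E\<close> by (simp add: variant_def)
      then show ?thesis
        using that a by (simp add: E0_def assign_tuples_xvar)
    qed
    then have "sat U F R (E \<circ> pair_vars n m i 0) \<phi> = holds U F R \<phi> (a i @ y E)"
      using a by (intro sat_pair_vars[OF fv]) (auto simp: y_def)
    then show ?thesis
      by (simp add: S_def)
  qed
  have "\<exists>E. variant V E0 E \<and> (\<forall>T\<in>range S. T E)"
  proof (rule realize_vars)
    show "finite V" "range E0 \<subseteq> U"
      using E0 by (simp_all add: V_def)
    show "definable T" if "T \<in> range S" for T
      using that by (auto simp: S_def definable_pair_vars)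
  next
    fix SS0 assume "SS0 \<subseteq> range S" "finite SS0"
    then obtain I where I: "finite I" "SS0 = S ` I"
      by (meson finite_subset_image)
    then obtain b where b: "set b \<subseteq> U" "length b = m" "\<forall>i\<in>I. holds U F R \<phi> (a i @ b) = p i"
      using p unfolding phi_types_def by blast
    define E where "E = assign_tuples E0 (\<lambda>_. []) (\<lambda>j. if j = 0 then b else [])"
    have "range E \<subseteq> U"
      unfolding E_def using E0 b(1) by (intro range_assign_tuples) auto
    moreover have "E u = E0 u" if "u \<notin> V" for u
      unfolding E_def using that b(2) by (intro assign_tuples_other) (auto simp: V_def split: if_splits)
    ultimately have "variant V E0 E"
      by (simp add: variant_def)
    moreover have "y E = b"
      using b(2) by (simp add: y_def E_def assign_tuples_yvar list_eq_iff_nth_eq)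
    ultimately show "\<exists>E. variant V E0 E \<and> (\<forall>T\<in>SS0. T E)"
      using I(2) b(3) S_iff by auto
  qed
  then obtain E where "variant V E0 E" "\<forall>i. S i E"
    by blast
  moreover have "set (y E) \<subseteq> U" "length (y E) = m"
    using \<open>variant V E0 E\<close> by (auto simp: y_def variant_def)
  ultimately show ?thesis
    using S_iff by blast
qed

end

section \<open>Stability bounds the size of half graphs\<close>

lemma order_propertyI:
  fixes a b :: "nat \<Rightarrow> 'u list"
  assumes "\<forall>i. set (a i) \<subseteq> U \<and> length (a i) = n" "\<forall>j. set (b j) \<subseteq> U \<and> length (b j) = m"
    and "\<forall>i j. holds U F R \<phi> (a i @ b j) \<longleftrightarrow> i < j"
  shows "order_property U F R \<phi> n m"
  unfolding order_property_def using assms by blast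

definition finite_order_property ::
    "'u set \<Rightarrow> ('f \<Rightarrow> 'u list \<Rightarrow> 'u) \<Rightarrow> ('r \<Rightarrow> 'u list \<Rightarrow> bool) \<Rightarrow> ('f, 'r) fm \<Rightarrow> nat \<Rightarrow> nat \<Rightarrow> nat \<Rightarrow> bool"
  where "finite_order_property U F R \<phi> n m k \<longleftrightarrow>
    (\<exists>a b :: nat \<Rightarrow> 'u list.
        (\<forall>i<k. set (a i) \<subseteq> U \<and> length (a i) = n) \<and>
        (\<forall>j<k. set (b j) \<subseteq> U \<and> length (b j) = m) \<and>
        (\<forall>i<k. \<forall>j<k. holds U F R \<phi> (a i @ b j) \<longleftrightarrow> i < j))"

context monster_model
begin

definition half_graph :: "('f, 'r) fm \<Rightarrow> nat \<Rightarrow> nat \<Rightarrow> nat \<Rightarrow> (nat \<Rightarrow> 'u) \<Rightarrow> bool" where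
  "half_graph \<phi> n m k E \<longleftrightarrow> (\<forall>i<k. \<forall>j<k. sat U F R (E \<circ> pair_vars n m i j) \<phi> \<longleftrightarrow> i < j)"

definition extends_to_half_graph ::
    "('f, 'r) fm \<Rightarrow> nat \<Rightarrow> nat \<Rightarrow> nat \<Rightarrow> nat \<Rightarrow> (nat \<Rightarrow> 'u) \<Rightarrow> bool" where
  "extends_to_half_graph \<phi> n m s k E \<longleftrightarrow> (\<exists>E'. range E' \<subseteq> U \<and>
     (\<forall>i<s. \<forall>c<n. E' (xvar i c) = E (xvar i c)) \<and> half_graph \<phi> n m k E')"

lemma half_graph_mono: "half_graph \<phi> n m k E \<Longrightarrow> k' \<le> k \<Longrightarrow> half_graph \<phi> n m k' E"
  unfolding half_graph_def by auto

lemma half_graph_cong: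
  assumes "fv \<phi> \<subseteq> {..<n + m}"
    and "\<forall>i<k. \<forall>c<n. E (xvar i c) = E' (xvar i c)" "\<forall>j<k. \<forall>c<m. E (yvar j c) = E' (yvar j c)"
  shows "half_graph \<phi> n m k E = half_graph \<phi> n m k E'"
proof -
  have "sat U F R (E \<circ> pair_vars n m i j) \<phi> = sat U F R (E' \<circ> pair_vars n m i j) \<phi>"
    if "i < k" "j < k" for i j
  proof (rule sat_cong, rule ballI)
    fix u assume "u \<in> fv \<phi>"
    then have "u < n + m"
      using assms(1) by auto
    then show "(E \<circ> pair_vars n m i j) u = (E' \<circ> pair_vars n m i j) u"
      using assms(2,3) that by (auto simp: pair_vars_def)
  qed
  then show ?thesis
    unfolding half_graph_def by auto
qed

lemma definable_half_graph: "definable (half_graph \<phi> n m k)"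
proof -
  have "definable (\<lambda>E. \<forall>(i, j)\<in>{..<k} \<times> {..<k}. sat U F R (E \<circ> pair_vars n m i j) \<phi> \<longleftrightarrow> i < j)"
    by (intro definable_Ball) (auto simp: definable_pair_vars)
  then show ?thesis
    by (rule definable_cong) (auto simp: half_graph_def)
qed

lemma extends_to_half_graph_0:
  assumes "finite_order_property U F R \<phi> n m k" "fv \<phi> \<subseteq> {..<n + m}"
  shows "extends_to_half_graph \<phi> n m 0 k E"
  unfolding extends_to_half_graph_def
proof -
  obtain d where d: "d \<in> U"
    using universe_nonempty by blast
  obtain a b where ab: "\<forall>i<k. set (a i) \<subseteq> U \<and> length (a i) = n"
    "\<forall>j<k. set (b j) \<subseteq> U \<and> length (b j) = m" "\<forall>i<k. \<forall>j<k. holds U F R \<phi> (a i @ b j) \<longleftrightarrow> i < j"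
    using assms(1) unfolding finite_order_property_def by blast
  define E' where "E' = assign_tuples (\<lambda>_. d) (\<lambda>i. if i < k then a i else []) (\<lambda>j. if j < k then b j else [])"
  have "range E' \<subseteq> U"
    unfolding E'_def using d ab(1,2) by (intro range_assign_tuples) auto
  moreover have "half_graph \<phi> n m k E'"
    unfolding half_graph_def
  proof (intro allI impI)
    fix i j assume ij: "i < k" "j < k"
    have "sat U F R (E' \<circ> pair_vars n m i j) \<phi> = holds U F R \<phi> (a i @ b j)"
      using ab(1,2) ij by (intro sat_pair_vars[OF assms(2)]) (auto simp: E'_def assign_tuples_xvar assign_tuples_yvar)
    then show "sat U F R (E' \<circ> pair_vars n m i j) \<phi> \<longleftrightarrow> i < j"
      using ab(3) ij by simp
  qed
  ultimately show "\<exists>E'. range E' \<subseteq> U \<and> (\<forall>i<0. \<forall>c<n. E' (xvar i c) = E (xvar i c)) \<and> half_graph \<phi> n m k E'"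
    by blast
qed

lemma definable_extends_to_half_graph:
  assumes fv: "fv \<phi> \<subseteq> {..<n + m}"
  shows "definable (extends_to_half_graph \<phi> n m s k)"
proof -
  define W where "W = (\<lambda>(i, c). xvar i c) ` ({s..<k} \<times> {..<n}) \<union> (\<lambda>(j, c). yvar j c) ` ({..<k} \<times> {..<m})"
  have "finite W"
    by (simp add: W_def)
  then have "definable (\<lambda>E. \<exists>E'. variant W E E' \<and> half_graph \<phi> n m k E')"
    by (rule definable_Ex_variant) (rule definable_half_graph)
  then show ?thesis
    unfolding extends_to_half_graph_def
  proof (rule definable_cong)
    fix E :: "nat \<Rightarrow> 'u" assume E: "range E \<subseteq> U"
    have xvar_notin: "xvar i c \<notin> W" if "i < s" for i c
      using that by (auto simp: W_def)
    show "(\<exists>E'. variant W E E' \<and> half_graph \<phi> n m k E') \<longleftrightarrow>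
      (\<exists>E'. range E' \<subseteq> U \<and> (\<forall>i<s. \<forall>c<n. E' (xvar i c) = E (xvar i c)) \<and> half_graph \<phi> n m k E')"
    proof
      assume "\<exists>E'. variant W E E' \<and> half_graph \<phi> n m k E'"
      then show "\<exists>E'. range E' \<subseteq> U \<and> (\<forall>i<s. \<forall>c<n. E' (xvar i c) = E (xvar i c)) \<and> half_graph \<phi> n m k E'"
        using xvar_notin unfolding variant_def by blast
    next
      assume "\<exists>E'. range E' \<subseteq> U \<and> (\<forall>i<s. \<forall>c<n. E' (xvar i c) = E (xvar i c)) \<and> half_graph \<phi> n m k E'"
      then obtain E' where E': "range E' \<subseteq> U" "\<forall>i<s. \<forall>c<n. E' (xvar i c) = E (xvar i c)"
        "half_graph \<phi> n m k E'" by blast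
      define E'' where "E'' u = (if u \<in> W then E' u else E u)" for u
      have "variant W E E''"
        using E E'(1) by (auto simp: variant_def E''_def)
      moreover have "half_graph \<phi> n m k E'' = half_graph \<phi> n m k E'"
      proof (rule half_graph_cong[OF fv])
        show "\<forall>i<k. \<forall>c<n. E'' (xvar i c) = E' (xvar i c)"
        proof (intro allI impI)
          fix i c assume "i < k" "c < n"
          show "E'' (xvar i c) = E' (xvar i c)"
          proof (cases "i < s")
            case True
            then show ?thesis
              using E'(2) xvar_notin \<open>c < n\<close> by (simp add: E''_def)
          next
            case False
            then have "xvar i c \<in> W"
              using \<open>i < k\<close> \<open>c < n\<close> unfolding W_def by force
            then show ?thesis
              by (simp add: E''_def)
          qed
        qed
        show "\<forall>j<k. \<forall>c<m. E'' (yvar j c) = E' (yvar j c)"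
          by (auto simp: E''_def W_def)
      qed
      ultimately show "\<exists>E'. variant W E E' \<and> half_graph \<phi> n m k E'"
        using E'(3) by blast
    qed
  qed
qed

(* An infinite half graph is built one x-tuple at a time, keeping the invariant that the
   tuples chosen so far start arbitrarily large finite half graphs. *)
lemma extends_to_half_graph_Suc:
  assumes fv: "fv \<phi> \<subseteq> {..<n + m}" and E: "range E \<subseteq> U"
    and ext: "\<forall>k. extends_to_half_graph \<phi> n m s k E"
  shows "\<exists>E'. variant (xvar s ` {..<n}) E E' \<and> (\<forall>k. extends_to_half_graph \<phi> n m (Suc s) k E')"
proof -
  define V where "V = xvar s ` {..<n}"
  have "\<exists>E'. variant V E E' \<and> (\<forall>S\<in>range (\<lambda>k. extends_to_half_graph \<phi> n m (Suc s) k). S E')"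
  proof (rule realize_vars)
    show "finite V" "range E \<subseteq> U"
      using E by (simp_all add: V_def)
    show "definable S" if "S \<in> range (\<lambda>k. extends_to_half_graph \<phi> n m (Suc s) k)" for S
      using that definable_extends_to_half_graph[OF fv] by auto
  next
    fix SS0 assume "SS0 \<subseteq> range (\<lambda>k. extends_to_half_graph \<phi> n m (Suc s) k)" "finite SS0"
    then obtain K where K: "finite K" "SS0 = (\<lambda>k. extends_to_half_graph \<phi> n m (Suc s) k) ` K"
      by (meson finite_subset_image)
    obtain E' where E': "range E' \<subseteq> U" "\<forall>i<s. \<forall>c<n. E' (xvar i c) = E (xvar i c)"
      "half_graph \<phi> n m (Max (insert 0 K)) E'"
      using ext unfolding extends_to_half_graph_def by blast
    define E1 where "E1 u = (if u \<in> V then E' u else E u)" for u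
    have "variant V E E1"
      using E E'(1) by (auto simp: variant_def E1_def)
    moreover have "extends_to_half_graph \<phi> n m (Suc s) k E1" if "k \<in> K" for k
    proof -
      have "\<forall>i<Suc s. \<forall>c<n. E' (xvar i c) = E1 (xvar i c)"
        using E'(2) by (auto simp: E1_def V_def less_Suc_eq)
      moreover have "half_graph \<phi> n m k E'"
        using E'(3) K(1) that by (auto intro: half_graph_mono)
      ultimately show ?thesis
        using E'(1) unfolding extends_to_half_graph_def by blast
    qed
    ultimately show "\<exists>E'. variant V E E' \<and> (\<forall>S\<in>SS0. S E')"
      unfolding K(2) by auto
  qed
  then show ?thesis
    unfolding V_def by auto
qed

lemma infinite_half_graph_types:
  assumes fv: "fv \<phi> \<subseteq> {..<n + m}" and fop: "\<forall>k. finite_order_property U F R \<phi> n m k"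
  shows "\<exists>a. (\<forall>i. set (a i) \<subseteq> U \<and> length (a i) = n) \<and> (\<forall>t. (\<lambda>i. i < t) \<in> phi_types U F R \<phi> m a)"
proof -
  obtain d where d: "d \<in> U"
    using universe_nonempty by blast
  define nxt where "nxt s E = (SOME E'. variant (xvar s ` {..<n}) E E' \<and>
    (\<forall>k. extends_to_half_graph \<phi> n m (Suc s) k E'))" for s E
  have nxt: "variant (xvar s ` {..<n}) E (nxt s E) \<and> (\<forall>k. extends_to_half_graph \<phi> n m (Suc s) k (nxt s E))"
    if "range E \<subseteq> U" "\<forall>k. extends_to_half_graph \<phi> n m s k E" for s E
    using extends_to_half_graph_Suc[OF fv that] unfolding nxt_def by (rule someI_ex)
  define Es where "Es = rec_nat (\<lambda>_. d) nxt"
  have Es_0: "Es 0 = (\<lambda>_. d)" and Es_Suc: "Es (Suc s) = nxt s (Es s)" for s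
    by (simp_all add: Es_def)
  have Es: "range (Es s) \<subseteq> U \<and> (\<forall>k. extends_to_half_graph \<phi> n m s k (Es s))" for s
  proof (induction s)
    case 0
    show ?case
      using d extends_to_half_graph_0[OF fop[rule_format] fv] by (auto simp: Es_0)
  next
    case (Suc s)
    then show ?case
      using nxt[of "Es s" s] by (simp add: Es_Suc variant_def)
  qed
  have Es_variant: "variant (xvar s ` {..<n}) (Es s) (Es (Suc s))" for s
    using Es[of s] nxt[of "Es s" s] by (simp add: Es_Suc)
  have Es_xvar: "Es s (xvar i c) = Es (Suc i) (xvar i c)" if "Suc i \<le> s" for s i c
    using that
  proof (induction s rule: dec_induct)
    case (step s)
    then have "xvar i c \<notin> xvar s ` {..<n}"
      by auto
    then show ?case
      using step.IH Es_variant[of s] by (simp add: variant_def)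
  qed simp
  define a where "a i = map (\<lambda>c. Es (Suc i) (xvar i c)) [0..<n]" for i
  have a: "\<forall>i. set (a i) \<subseteq> U \<and> length (a i) = n"
    using Es by (auto simp: a_def)
  have "(\<lambda>i. i < t) \<in> phi_types U F R \<phi> m a" for t
    unfolding phi_types_def
  proof (intro CollectI allI impI)
    fix I :: "nat set" assume "finite I"
    define Z where "Z = Suc (Max (insert t I))"
    have "t < Z" and IZ: "\<And>i. i \<in> I \<Longrightarrow> i < Z"
      using \<open>finite I\<close> by (auto simp: Z_def le_imp_less_Suc)
    obtain E' where E': "range E' \<subseteq> U" "\<forall>i<Z. \<forall>c<n. E' (xvar i c) = Es Z (xvar i c)"
      "half_graph \<phi> n m Z E'"
      using Es[of Z] unfolding extends_to_half_graph_def by blast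
    define b where "b = map (\<lambda>c. E' (yvar t c)) [0..<m]"
    have "holds U F R \<phi> (a i @ b) = (i < t)" if "i \<in> I" for i
    proof -
      have "E' (xvar i c) = a i ! c" if "c < n" for c
        using E'(2) IZ[OF \<open>i \<in> I\<close>] Es_xvar[of i Z c] that by (simp add: a_def)
      then have "sat U F R (E' \<circ> pair_vars n m i t) \<phi> = holds U F R \<phi> (a i @ b)"
        using a by (intro sat_pair_vars[OF fv]) (auto simp: b_def)
      then show ?thesis
        using E'(3) IZ[OF that] \<open>t < Z\<close> unfolding half_graph_def by blast
    qed
    moreover have "set b \<subseteq> U" "length b = m"
      using E'(1) by (auto simp: b_def)
    ultimately show "\<exists>b. set b \<subseteq> U \<and> length b = m \<and> (\<forall>i\<in>I. holds U F R \<phi> (a i @ b) = (i < t))"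
      by blast
  qed
  with a show ?thesis
    by blast
qed

lemma stable_bounded_half_graphs:
  assumes "stable U F R" and fv: "fv \<phi> \<subseteq> {..<n + m}"
  shows "\<exists>K. \<not> finite_order_property U F R \<phi> n m K"
proof (rule ccontr)
  assume "\<nexists>K. \<not> finite_order_property U F R \<phi> n m K"
  then obtain a where a: "\<forall>i. set (a i) \<subseteq> U \<and> length (a i) = n"
    and types: "\<forall>t. (\<lambda>i. i < t) \<in> phi_types U F R \<phi> m a"
    using infinite_half_graph_types[OF fv] by blast
  have "\<forall>t. \<exists>b. set b \<subseteq> U \<and> length b = m \<and> (\<forall>i. holds U F R \<phi> (a i @ b) = (i < t))"
    using phi_type_realized[OF fv a] types by blast
  then obtain b where b: "\<forall>t. set (b t) \<subseteq> U \<and> length (b t) = m \<and> (\<forall>i. holds U F R \<phi> (a i @ b t) = (i < t))"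
    by metis
  have "order_property U F R \<phi> n m"
    by (rule order_propertyI[OF a]) (use b in auto)
  with assms show False
    unfolding stable_def by blast
qed

end

section \<open>Sequences of truth values\<close>

lemma tendsto_of_bool_eventually_const:
  assumes "\<And>i. M \<le> i \<Longrightarrow> p i = p M"
  shows "(\<lambda>i. of_bool (p i) :: real) \<longlonglongrightarrow> of_bool (p M)"
proof (intro tendsto_eventually eventually_sequentiallyI)
  fix i assume "M \<le> i"
  then have "p i = p M"
    by (rule assms)
  then show "of_bool (p i) = (of_bool (p M) :: real)"
    by simp
qed

lemma of_bool_seq_limit:
  assumes "(\<lambda>i. of_bool (p i) :: real) \<longlonglongrightarrow> L"
  shows "\<exists>M. (\<forall>i\<ge>M. p i = p M) \<and> L = of_bool (p M)"
proof -
  obtain M where M: "\<forall>i\<ge>M. dist (of_bool (p i)) L < (1/2 :: real)"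
    using LIMSEQ_D[OF assms, of "1/2"] by (auto simp: dist_norm)
  have const: "p i = p M" if "i \<ge> M" for i
  proof (rule ccontr)
    assume "p i \<noteq> p M"
    then have "dist (of_bool (p i)) (of_bool (p M) :: real) = 1"
      by (cases "p i") (auto simp: dist_real_def)
    moreover have "dist (of_bool (p i)) (of_bool (p M) :: real) < 1"
      using dist_triangle_half_l[of "of_bool (p i)" L 1 "of_bool (p M)"] M that by auto
    ultimately show False
      by simp
  qed
  from assms tendsto_of_bool_eventually_const[where p = p and M = M, OF const] have "L = of_bool (p M)"
    by (rule LIMSEQ_unique)
  with const show ?thesis
    by blast
qed

lemma finite_changes_variation:
  assumes "finite {i. w i \<noteq> w (Suc i)}"
  shows "summable (\<lambda>i. \<bar>of_bool (w i) - of_bool (w (Suc i)) :: real\<bar>)"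
    and "(\<Sum>i. \<bar>of_bool (w i) - of_bool (w (Suc i)) :: real\<bar>) = card {i. w i \<noteq> w (Suc i)}"
proof -
  have eq: "(\<lambda>i. \<bar>of_bool (w i) - of_bool (w (Suc i)) :: real\<bar>) = (\<lambda>i. of_bool (i \<in> {i. w i \<noteq> w (Suc i)}))"
    by (auto simp: fun_eq_iff)
  show "summable (\<lambda>i. \<bar>of_bool (w i) - of_bool (w (Suc i)) :: real\<bar>)"
    unfolding eq using assms by (rule summable_finite) simp
  have "(\<Sum>i. of_bool (i \<in> {i. w i \<noteq> w (Suc i)}) :: real) = (\<Sum>i\<in>{i. w i \<noteq> w (Suc i)}. 1)"
    using assms by (subst suminf_finite) auto
  then show "(\<Sum>i. \<bar>of_bool (w i) - of_bool (w (Suc i)) :: real\<bar>) = card {i. w i \<noteq> w (Suc i)}"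
    unfolding eq by simp
qed

lemma finite_changes_convergent:
  assumes "finite {i. w i \<noteq> w (Suc i)}"
  shows "convergent (\<lambda>i. of_bool (w i) :: real)"
proof -
  define M where "M = Suc (Max (insert 0 {i. w i \<noteq> w (Suc i)}))"
  have no_change: "w i = w (Suc i)" if "M \<le> i" for i
  proof (rule ccontr)
    assume "w i \<noteq> w (Suc i)"
    then have "i \<le> Max (insert 0 {i. w i \<noteq> w (Suc i)})"
      using assms by simp
    with that show False
      by (simp add: M_def)
  qed
  have "w i = w M" if "M \<le> i" for i
    using that
  proof (induction i rule: dec_induct)
    case (step i)
    then show ?case
      using no_change[of i] by simp
  qed simp
  then show ?thesis
    by (rule convergentI[OF tendsto_of_bool_eventually_const])
qed

lemma alternating_subsequence:
  assumes "finite D" "L \<le> card D" "\<forall>d\<in>D. x \<le> d \<and> w d \<noteq> w (Suc d)"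
  shows "\<exists>g. strict_mono g \<and> g 0 = x \<and> (\<forall>r\<le>L. w (g r) \<longleftrightarrow> (w x \<longleftrightarrow> even r))"
  using assms
proof (induction L arbitrary: x D)
  case 0
  show ?case
    by (rule exI[of _ "\<lambda>r. x + r"]) (simp add: strict_mono_def)
next
  case (Suc L)
  then obtain d1 where "d1 \<in> D"
    by fastforce
  define d0 where "d0 = (LEAST d. x \<le> d \<and> w d \<noteq> w (Suc d))"
  have d0: "x \<le> d0" "w d0 \<noteq> w (Suc d0)"
    using LeastI[of "\<lambda>d. x \<le> d \<and> w d \<noteq> w (Suc d)" d1] \<open>d1 \<in> D\<close> Suc.prems(3) by (auto simp: d0_def)
  have d0_le: "d0 \<le> d" if "d \<in> D" for d
    unfolding d0_def using that Suc.prems(3) by (auto intro: Least_le)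
  have "w (x + k) = w x" if "x + k \<le> d0" for k
    using that
  proof (induction k)
    case (Suc k)
    then have "\<not> (x \<le> x + k \<and> w (x + k) \<noteq> w (Suc (x + k)))"
      unfolding d0_def by (intro not_less_Least) (simp add: d0_def)
    with Suc show ?case
      by simp
  qed simp
  from this[of "d0 - x"] d0 have w_Suc_d0: "w (Suc d0) \<longleftrightarrow> \<not> w x"
    by auto
  have "finite (D - {d0})" "L \<le> card (D - {d0})" "\<forall>d\<in>D - {d0}. Suc d0 \<le> d \<and> w d \<noteq> w (Suc d)"
    using Suc.prems d0_le by (auto simp: card_Diff_singleton_if Suc_le_eq order.not_eq_order_implies_strict)
  then obtain g where g: "strict_mono g" "g 0 = Suc d0" "\<forall>r\<le>L. w (g r) \<longleftrightarrow> (w (Suc d0) \<longleftrightarrow> even r)"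
    using Suc.IH by blast
  show ?case
  proof (intro exI conjI allI impI)
    show "strict_mono (case_nat x g)"
      unfolding strict_mono_Suc_iff using g(1,2) d0(1)
      by (auto simp: strict_mono_Suc_iff split: nat.split)
    show "case_nat x g 0 = x"
      by simp
    show "w (case_nat x g r) \<longleftrightarrow> (w x \<longleftrightarrow> even r)" if "r \<le> Suc L" for r
      using that g(3) w_Suc_d0 by (cases r) auto
  qed
qed

lemma Ramsey_subsequence:
  fixes P :: "nat set \<Rightarrow> bool"
  obtains h :: "nat \<Rightarrow> nat" where "strict_mono h"
    and "(\<forall>X. finite X \<and> card X = k \<longrightarrow> P (h ` X)) \<or> (\<forall>X. finite X \<and> card X = k \<longrightarrow> \<not> P (h ` X))"
proof -
  have "\<forall>X. X \<subseteq> UNIV \<and> finite X \<and> card X = k \<longrightarrow> of_bool (P X) < (2 :: nat)"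
    by (simp add: of_bool_def)
  from Ramsey[OF infinite_UNIV_nat this]
  obtain Y and t :: nat where Y: "infinite Y" "t < 2"
    and homog: "\<forall>X. X \<subseteq> Y \<and> finite X \<and> card X = k \<longrightarrow> of_bool (P X) = t"
    by blast
  obtain h :: "nat \<Rightarrow> nat" where h: "strict_mono h" "\<forall>n. h n \<in> Y"
    using infinite_enumerate[OF Y(1)] by blast
  have colour: "P (h ` X) \<longleftrightarrow> t = 1" if "finite X" "card X = k" for X
  proof -
    have "inj_on h X"
      using strict_mono_imp_inj_on[OF h(1)] by (rule inj_on_subset) (rule subset_UNIV)
    then have "h ` X \<subseteq> Y" "finite (h ` X)" "card (h ` X) = k"
      using that h(2) by (auto simp: card_image)
    then have "of_bool (P (h ` X)) = t"
      using homog by blast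
    then show ?thesis
      using Y(2) by (cases "P (h ` X)") auto
  qed
  then have "(\<forall>X. finite X \<and> card X = k \<longrightarrow> P (h ` X)) \<or> (\<forall>X. finite X \<and> card X = k \<longrightarrow> \<not> P (h ` X))"
    by blast
  with h(1) show ?thesis
    by (rule that)
qed

lemma card_strict_mono_image:
  assumes "strict_mono (g :: nat \<Rightarrow> nat)"
  shows "card (g ` {..<L}) = L"
    and "r < L \<Longrightarrow> card {y \<in> g ` {..<L}. y < g r} = r"
proof -
  have inj: "inj g"
    using assms by (rule strict_mono_imp_inj_on)
  then show "card (g ` {..<L}) = L"
    by (simp add: card_image inj_on_subset)
  assume "r < L"
  then have "{y \<in> g ` {..<L}. y < g r} = g ` {..<r}"
    using assms by (auto simp: strict_mono_less)
  then show "card {y \<in> g ` {..<L}. y < g r} = r"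
    using inj by (simp add: card_image inj_on_subset)
qed

lemma not_locally_constant_alternation:
  assumes conv: "\<forall>q\<in>P. (\<lambda>i. of_bool (q i) :: real) \<longlonglongrightarrow> f q" and "p \<in> P"
    and jumps: "\<forall>x. \<exists>q\<in>P. (\<forall>i\<le>x. q i = p i) \<and> f q \<noteq> f p"
  shows "\<exists>(xs :: nat \<Rightarrow> nat) (qs :: nat \<Rightarrow> nat \<Rightarrow> bool) v.
    strict_mono xs \<and> (\<forall>t. qs t \<in> P) \<and> (\<forall>s t. qs t (xs s) \<longleftrightarrow> (s \<le> t \<longleftrightarrow> v))"
proof -
  obtain Mp where Mp: "\<forall>i\<ge>Mp. p i = p Mp" "f p = of_bool (p Mp)"
    using of_bool_seq_limit conv \<open>p \<in> P\<close> by blast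
  obtain Q where Q: "\<forall>x. Q x \<in> P \<and> (\<forall>i\<le>x. Q x i = p i) \<and> f (Q x) \<noteq> f p"
    using jumps by metis
  have "\<forall>q\<in>P. \<exists>M. (\<forall>i\<ge>M. q i = q M) \<and> f q = of_bool (q M)"
    using conv of_bool_seq_limit by blast
  then obtain Mf where Mf: "\<forall>q\<in>P. (\<forall>i\<ge>Mf q. q i = q (Mf q)) \<and> f q = of_bool (q (Mf q))"
    by metis
  have Q_tail: "Q x i \<longleftrightarrow> \<not> p Mp" if "Mf (Q x) \<le> i" for x i
  proof -
    have "Q x i = Q x (Mf (Q x))" "f (Q x) = of_bool (Q x (Mf (Q x)))"
      using Mf Q that by blast+
    moreover have "f (Q x) \<noteq> of_bool (p Mp)"
      using Q Mp(2) by metis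
    ultimately show ?thesis
      by auto
  qed
  define xs where "xs = rec_nat Mp (\<lambda>_ x. max (Suc x) (Mf (Q x)))"
  have xs_0: "xs 0 = Mp" and xs_Suc: "xs (Suc s) = max (Suc (xs s)) (Mf (Q (xs s)))" for s
    by (simp_all add: xs_def)
  have "strict_mono xs"
    unfolding strict_mono_Suc_iff xs_Suc by (simp add: less_max_iff_disj)
  have xs_ge: "Mp \<le> xs s" for s
    by (induction s) (simp_all add: xs_0 xs_Suc)
  have pattern: "Q (xs t) (xs s) \<longleftrightarrow> (s \<le> t \<longleftrightarrow> p Mp)" for s t
  proof (cases "s \<le> t")
    case True
    then have "Q (xs t) (xs s) = p (xs s)"
      using Q \<open>strict_mono xs\<close> by (simp add: strict_mono_less_eq)
    also have "\<dots> = p Mp"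
      using Mp(1) xs_ge by blast
    finally show ?thesis
      using True by simp
  next
    case False
    then have "xs (Suc t) \<le> xs s"
      using \<open>strict_mono xs\<close> by (simp add: strict_mono_less_eq)
    then have "Mf (Q (xs t)) \<le> xs s"
      by (simp add: xs_Suc)
    then show ?thesis
      using Q_tail False by simp
  qed
  show ?thesis
  proof (intro exI conjI allI)
    show "strict_mono xs"
      by fact
    show "Q (xs t) \<in> P" for t
      using Q by blast
    show "Q (xs t) (xs s) \<longleftrightarrow> (s \<le> t \<longleftrightarrow> p Mp)" for s t
      by (fact pattern)
  qed
qed

section \<open>Continuity on the space of phi-types\<close>

lemma openin_stone_top_cylinder:
  "openin (stone_top U F R \<phi> m a) {q \<in> phi_types U F R \<phi> m a. \<forall>i\<le>x. q i = p i}"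
proof -
  define S where "S i = {y. i \<le> x \<longrightarrow> y = p i}" for i
  have "openin (product_topology (\<lambda>_. discrete_topology UNIV) UNIV) (PiE UNIV S)"
    unfolding openin_PiE_gen
    by (rule disjI2, intro conjI) (auto intro: finite_subset[of _ "{..x}"] simp: S_def)
  moreover have "{q \<in> phi_types U F R \<phi> m a. \<forall>i\<le>x. q i = p i} = PiE UNIV S \<inter> phi_types U F R \<phi> m a"
    by (auto simp: S_def PiE_iff)
  ultimately show ?thesis
    unfolding stone_top_def openin_subtopology by blast
qed

lemma continuous_map_stone_top_locally_constant:
  assumes "\<forall>p\<in>phi_types U F R \<phi> m a. \<exists>x. \<forall>q\<in>phi_types U F R \<phi> m a. (\<forall>i\<le>x. q i = p i) \<longrightarrow> f q = f p"
  shows "continuous_map (stone_top U F R \<phi> m a) euclideanreal f"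
  unfolding continuous_map_def
proof (intro conjI allI impI)
  let ?P = "phi_types U F R \<phi> m a"
  fix V :: "real set"
  have "\<exists>T. openin (stone_top U F R \<phi> m a) T \<and> p \<in> T \<and> T \<subseteq> {q \<in> ?P. f q \<in> V}"
    if p: "p \<in> ?P" "f p \<in> V" for p
  proof -
    obtain x where x: "\<forall>q\<in>?P. (\<forall>i\<le>x. q i = p i) \<longrightarrow> f q = f p"
      using assms p(1) by blast
    have sub: "{q \<in> ?P. \<forall>i\<le>x. q i = p i} \<subseteq> {q \<in> ?P. f q \<in> V}"
    proof
      fix q assume "q \<in> {q \<in> ?P. \<forall>i\<le>x. q i = p i}"
      then have "q \<in> ?P" "f q = f p"
        using x by auto
      then show "q \<in> {q \<in> ?P. f q \<in> V}"
        using p(2) by simp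
    qed
    show ?thesis
    proof (intro exI conjI)
      show "openin (stone_top U F R \<phi> m a) {q \<in> ?P. \<forall>i\<le>x. q i = p i}"
        by (rule openin_stone_top_cylinder)
      show "p \<in> {q \<in> ?P. \<forall>i\<le>x. q i = p i}"
        using p(1) by simp
    qed (fact sub)
  qed
  then show "openin (stone_top U F R \<phi> m a) {q \<in> topspace (stone_top U F R \<phi> m a). f q \<in> V}"
    by (subst openin_subopen) (simp add: stone_top_def)
qed (simp add: stone_top_def)

lemma half_graph_types:
  fixes a b :: "nat \<Rightarrow> 'u list"
  assumes b: "\<forall>k. set (b k) \<subseteq> U \<and> length (b k) = m"
    and ord: "\<forall>i k. holds U F R \<phi> (a i @ b k) \<longleftrightarrow> i < k"
  shows "(\<lambda>i. i < k) \<in> phi_types U F R \<phi> m a" and "(\<lambda>_. True) \<in> phi_types U F R \<phi> m a"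
proof -
  show "(\<lambda>i. i < k) \<in> phi_types U F R \<phi> m a"
    unfolding phi_types_def using b ord by blast
  have "\<exists>b'. set b' \<subseteq> U \<and> length b' = m \<and> (\<forall>i\<in>I. holds U F R \<phi> (a i @ b') = True)"
    if "finite I" for I
  proof -
    obtain k where "\<forall>i\<in>I. i < k"
      using \<open>finite I\<close> finite_nat_bounded by blast
    then show ?thesis
      using b ord by blast
  qed
  then show "(\<lambda>_. True) \<in> phi_types U F R \<phi> m a"
    unfolding phi_types_def by blast
qed

lemma initial_segments_limit:
  "limitin (product_topology (\<lambda>_. discrete_topology UNIV) UNIV) (\<lambda>k (i :: nat). i < k) (\<lambda>_. True) sequentially"
  unfolding limitin_componentwise
proof (intro conjI ballI)
  fix i :: nat
  have "\<forall>\<^sub>F k in sequentially. (i < k) \<in> V" if "True \<in> V" for V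
    using that by (intro eventually_mono[OF eventually_gt_at_top[of i]]) simp
  then show "limitin (discrete_topology UNIV) (\<lambda>k. i < k) True sequentially"
    unfolding limitin_def by simp
qed auto

lemma half_graph_limit_discontinuous:
  fixes a b :: "nat \<Rightarrow> 'u list"
  assumes b: "\<forall>k. set (b k) \<subseteq> U \<and> length (b k) = m"
    and ord: "\<forall>i k. holds U F R \<phi> (a i @ b k) \<longleftrightarrow> i < k"
    and conv: "\<forall>p\<in>phi_types U F R \<phi> m a. (\<lambda>i. of_bool (p i) :: real) \<longlonglongrightarrow> f p"
  shows "\<not> continuous_map (stone_top U F R \<phi> m a) euclideanreal f"
proof
  assume cont: "continuous_map (stone_top U F R \<phi> m a) euclideanreal f"
  note types = half_graph_types[OF b ord]
  have "f (\<lambda>i. i < k) = 0" for k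
  proof -
    have "(\<lambda>i. of_bool (i < k) :: real) \<longlonglongrightarrow> 0"
      by (intro tendsto_eventually eventually_sequentiallyI[of k]) simp
    then show ?thesis
      using conv types(1) LIMSEQ_unique by blast
  qed
  moreover have "f (\<lambda>_. True) = 1"
    using conv types(2) LIMSEQ_unique[OF _ tendsto_const] by fastforce
  moreover have "limitin (stone_top U F R \<phi> m a) (\<lambda>k i. i < k) (\<lambda>_. True) sequentially"
    unfolding stone_top_def limitin_subtopology using types initial_segments_limit by simp
  then have "limitin euclideanreal (\<lambda>k. f (\<lambda>i. i < k)) (f (\<lambda>_. True)) sequentially"
    using continuous_map_limit[OF cont] by (simp add: comp_def)
  ultimately show False
    by (simp add: LIMSEQ_const_iff)
qed

section \<open>Convergent subsequences and continuous limits\<close>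

definition variation_bounded ::
    "'u set \<Rightarrow> ('f \<Rightarrow> 'u list \<Rightarrow> 'u) \<Rightarrow> ('r \<Rightarrow> 'u list \<Rightarrow> bool) \<Rightarrow> ('f, 'r) fm \<Rightarrow> nat \<Rightarrow> (nat \<Rightarrow> 'u list) \<Rightarrow> nat \<Rightarrow> bool"
  where "variation_bounded U F R \<phi> m a N \<longleftrightarrow> (\<forall>b. set b \<subseteq> U \<and> length b = m \<longrightarrow>
    summable (\<lambda>i. \<bar>of_bool (holds U F R \<phi> (a (Suc i) @ b)) - of_bool (holds U F R \<phi> (a (Suc (Suc i)) @ b)) :: real\<bar>) \<and>
    (\<Sum>i. \<bar>of_bool (holds U F R \<phi> (a (Suc i) @ b)) - of_bool (holds U F R \<phi> (a (Suc (Suc i)) @ b)) :: real\<bar>)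
      \<le> real N)"

lemma order_property_discontinuous_limits:
  assumes "order_property U F R \<phi> n m"
  obtains a :: "nat \<Rightarrow> 'u list" where "\<forall>i. set (a i) \<subseteq> U \<and> length (a i) = n"
    and "\<And>j f. strict_mono j \<Longrightarrow> \<forall>p\<in>phi_types U F R \<phi> m (a \<circ> j). (\<lambda>i. of_bool (p i)) \<longlonglongrightarrow> f p \<Longrightarrow>
      \<not> continuous_map (stone_top U F R \<phi> m (a \<circ> j)) euclideanreal f"
proof -
  obtain a b :: "nat \<Rightarrow> 'u list" where a: "\<forall>i. set (a i) \<subseteq> U \<and> length (a i) = n"
    and b: "\<forall>k. set (b k) \<subseteq> U \<and> length (b k) = m" and ord: "\<forall>i k. holds U F R \<phi> (a i @ b k) \<longleftrightarrow> i < k"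
    using assms unfolding order_property_def by blast
  have "\<not> continuous_map (stone_top U F R \<phi> m (a \<circ> j)) euclideanreal f"
    if j: "strict_mono j" and conv: "\<forall>p\<in>phi_types U F R \<phi> m (a \<circ> j). (\<lambda>i. of_bool (p i)) \<longlonglongrightarrow> f p"
    for j f
  proof (rule half_graph_limit_discontinuous[OF _ _ conv])
    show "\<forall>k. set ((b \<circ> j) k) \<subseteq> U \<and> length ((b \<circ> j) k) = m"
      using b by simp
    show "\<forall>i k. holds U F R \<phi> ((a \<circ> j) i @ (b \<circ> j) k) \<longleftrightarrow> i < k"
      using ord j by (simp add: strict_mono_less)
  qed
  with a show ?thesis
    using that by blast
qed

context monster_model
begin

lemma stable_limit_locally_constant:
  assumes st: "stable U F R" and fv: "fv \<phi> \<subseteq> {..<n + m}"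
    and a: "\<forall>i. set (a i) \<subseteq> U \<and> length (a i) = n"
    and conv: "\<forall>p\<in>phi_types U F R \<phi> m a. (\<lambda>i. of_bool (p i) :: real) \<longlonglongrightarrow> f p"
    and p: "p \<in> phi_types U F R \<phi> m a"
  shows "\<exists>x. \<forall>q\<in>phi_types U F R \<phi> m a. (\<forall>i\<le>x. q i = p i) \<longrightarrow> f q = f p"
proof (rule ccontr)
  assume "\<not> ?thesis"
  then have jumps: "\<forall>x. \<exists>q\<in>phi_types U F R \<phi> m a. (\<forall>i\<le>x. q i = p i) \<and> f q \<noteq> f p"
    by blast
  obtain xs :: "nat \<Rightarrow> nat" and qs v where xs: "strict_mono xs"
    and qs: "\<forall>t. qs t \<in> phi_types U F R \<phi> m a" and pattern: "\<forall>s t. qs t (xs s) \<longleftrightarrow> (s \<le> t \<longleftrightarrow> v)"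
    using not_locally_constant_alternation[OF conv p jumps] by blast
  have "\<forall>t. \<exists>b. set b \<subseteq> U \<and> length b = m \<and> (\<forall>i. holds U F R \<phi> (a i @ b) = qs t i)"
    using phi_type_realized[OF fv a qs[rule_format]] by blast
  then obtain b where b: "\<forall>t. set (b t) \<subseteq> U \<and> length (b t) = m \<and> (\<forall>i. holds U F R \<phi> (a i @ b t) = qs t i)"
    by metis
  define \<psi> where "\<psi> = (if v then \<phi> else Neg \<phi>)"
  have "\<forall>s t. holds U F R \<psi> (a (xs (Suc s)) @ b t) \<longleftrightarrow> s < t"
    using b pattern by (auto simp: \<psi>_def holds_Neg Suc_le_eq)
  moreover have "\<forall>i. set (a (xs (Suc i))) \<subseteq> U \<and> length (a (xs (Suc i))) = n"
    using a by simp
  moreover have "\<forall>t. set (b t) \<subseteq> U \<and> length (b t) = m"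
    using b by simp
  ultimately have "order_property U F R \<psi> n m"
    by (intro order_propertyI)
  moreover have "fv \<psi> \<subseteq> {..<n + m}"
    using fv by (simp add: \<psi>_def)
  ultimately show False
    using st unfolding stable_def by blast
qed

lemma stable_limit_continuous:
  assumes "stable U F R" "fv \<phi> \<subseteq> {..<n + m}" "\<forall>i. set (a i) \<subseteq> U \<and> length (a i) = n"
    and "\<forall>p\<in>phi_types U F R \<phi> m a. (\<lambda>i. of_bool (p i) :: real) \<longlonglongrightarrow> f p"
  shows "continuous_map (stone_top U F R \<phi> m a) euclideanreal f"
  using stable_limit_locally_constant[OF assms]
  by (intro continuous_map_stone_top_locally_constant) blast

definition alternation_realized :: "('f, 'r) fm \<Rightarrow> nat \<Rightarrow> (nat \<Rightarrow> 'u list) \<Rightarrow> nat \<Rightarrow> bool" where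
  "alternation_realized \<phi> m c L \<longleftrightarrow>
     (\<exists>b. set b \<subseteq> U \<and> length b = m \<and> (\<forall>r<L. holds U F R \<phi> (c r @ b) \<longleftrightarrow> even r))"

lemma finite_order_property_of_alternations:
  fixes c :: "nat \<Rightarrow> 'u list"
  assumes c: "\<forall>i. set (c i) \<subseteq> U \<and> length (c i) = n"
    and alt: "\<forall>g. strict_mono g \<longrightarrow> alternation_realized \<phi> m (c \<circ> g) (2 * K)"
  shows "finite_order_property U F R \<phi> n m K"
proof -
  \<comment> \<open>idx t places index 4s + 2 at an even position iff s < t\<close>
  define idx where "idx t r = 4 * (r div 2) + 1 + of_bool (r div 2 < t) + of_bool (odd r)" for t r :: nat
  have "strict_mono (idx t)" for t
    unfolding strict_mono_Suc_iff
  proof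
    fix r
    show "idx t r < idx t (Suc r)"
      by (cases "even r") (auto simp: idx_def elim!: evenE oddE)
  qed
  then have "\<forall>t. \<exists>b. set b \<subseteq> U \<and> length b = m \<and> (\<forall>r<2 * K. holds U F R \<phi> (c (idx t r) @ b) \<longleftrightarrow> even r)"
    using alt unfolding alternation_realized_def by simp
  then obtain b where b: "\<forall>t. set (b t) \<subseteq> U \<and> length (b t) = m \<and>
      (\<forall>r<2 * K. holds U F R \<phi> (c (idx t r) @ b t) \<longleftrightarrow> even r)"
    by metis
  have "holds U F R \<phi> (c (4 * s + 2) @ b t) \<longleftrightarrow> s < t" if "s < K" for s t
  proof (cases "s < t")
    case True
    then have "idx t (2 * s) = 4 * s + 2"
      by (simp add: idx_def)
    moreover have "2 * s < 2 * K"
      using that by simp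
    then have "holds U F R \<phi> (c (idx t (2 * s)) @ b t) \<longleftrightarrow> even (2 * s)"
      using b by blast
    ultimately show ?thesis
      using True by simp
  next
    case False
    then have "idx t (2 * s + 1) = 4 * s + 2"
      by (simp add: idx_def)
    moreover have "2 * s + 1 < 2 * K"
      using that by simp
    then have "holds U F R \<phi> (c (idx t (2 * s + 1)) @ b t) \<longleftrightarrow> even (2 * s + 1)"
      using b by blast
    ultimately show ?thesis
      using False by simp
  qed
  then show ?thesis
    unfolding finite_order_property_def
    by (intro exI[of _ "\<lambda>s. c (4 * s + 2)"] exI[of _ b]) (use c b in auto)
qed

lemma changes_bounded_without_alternation:
  fixes c :: "nat \<Rightarrow> 'u list"
  assumes noalt: "\<forall>g. strict_mono g \<longrightarrow> \<not> alternation_realized \<phi> m (c \<circ> g) L"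
    and b: "set b \<subseteq> U" "length b = m"
  shows "finite {i. holds U F R \<phi> (c (Suc i) @ b) \<noteq> holds U F R \<phi> (c (Suc (Suc i)) @ b)} \<and>
    card {i. holds U F R \<phi> (c (Suc i) @ b) \<noteq> holds U F R \<phi> (c (Suc (Suc i)) @ b)} \<le> L"
proof -
  define w where "w i = holds U F R \<phi> (c (Suc i) @ b)" for i
  have "finite {i. w i \<noteq> w (Suc i)} \<and> card {i. w i \<noteq> w (Suc i)} \<le> L"
  proof (rule ccontr)
    assume many: "\<not> ?thesis"
    obtain D where D: "finite D" "Suc L \<le> card D" "D \<subseteq> {i. w i \<noteq> w (Suc i)}"
    proof (cases "finite {i. w i \<noteq> w (Suc i)}")
      case True
      with many show ?thesis
        by (intro that[of "{i. w i \<noteq> w (Suc i)}"]) auto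
    next
      case False
      then obtain B where "finite B" "card B = Suc L" "B \<subseteq> {i. w i \<noteq> w (Suc i)}"
        using infinite_arbitrarily_large by blast
      then show ?thesis
        by (intro that[of B]) auto
    qed
    then obtain g where g: "strict_mono g" "g 0 = 0" "\<forall>r\<le>Suc L. w (g r) \<longleftrightarrow> (w 0 \<longleftrightarrow> even r)"
      using alternating_subsequence[OF D(1,2), of 0 w] by blast
    define off where "off = (if w 0 then 0 else 1 :: nat)"
    have "strict_mono (\<lambda>r. Suc (g (r + off)))"
      using g(1) by (simp add: strict_mono_def)
    moreover have "holds U F R \<phi> (c (Suc (g (r + off))) @ b) \<longleftrightarrow> even r" if "r < L" for r
      using g(3) that by (auto simp: w_def off_def)
    then have "alternation_realized \<phi> m (c \<circ> (\<lambda>r. Suc (g (r + off)))) L"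
      unfolding alternation_realized_def using b by auto
    ultimately show False
      using noalt by blast
  qed
  then show ?thesis
    by (simp add: w_def)
qed

lemma bounded_changes_limit:
  fixes c :: "nat \<Rightarrow> 'u list"
  assumes fv: "fv \<phi> \<subseteq> {..<n + m}" and c: "\<forall>i. set (c i) \<subseteq> U \<and> length (c i) = n"
    and changes: "\<And>b. set b \<subseteq> U \<Longrightarrow> length b = m \<Longrightarrow>
      finite {i. holds U F R \<phi> (c (Suc i) @ b) \<noteq> holds U F R \<phi> (c (Suc (Suc i)) @ b)}"
    and p: "p \<in> phi_types U F R \<phi> m c"
  shows "(\<lambda>i. of_bool (p i) :: real) \<longlonglongrightarrow> lim (\<lambda>i. of_bool (p i))"
proof -
  obtain b where b: "set b \<subseteq> U" "length b = m" "\<forall>i. holds U F R \<phi> (c i @ b) = p i"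
    using phi_type_realized[OF fv c p] by blast
  then have "finite {i. p (Suc i) \<noteq> p (Suc (Suc i))}"
    using changes[OF b(1,2)] by simp
  then have "convergent (\<lambda>i. of_bool (p (Suc i)) :: real)"
    by (rule finite_changes_convergent)
  then obtain L where "(\<lambda>i. of_bool (p (Suc i)) :: real) \<longlonglongrightarrow> L"
    unfolding convergent_def ..
  then have "convergent (\<lambda>i. of_bool (p i) :: real)"
    by (rule convergentI[OF LIMSEQ_imp_Suc])
  then show ?thesis
    by (simp add: convergent_LIMSEQ_iff)
qed

lemma stable_convergent_subsequence:
  assumes st: "stable U F R" and fv: "fv \<phi> \<subseteq> {..<n + m}"
    and a: "\<forall>i. set (a i) \<subseteq> U \<and> length (a i) = n"
  shows "\<exists>j :: nat \<Rightarrow> nat. strict_mono j \<and>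
    (\<exists>(N :: nat) (f :: (nat \<Rightarrow> bool) \<Rightarrow> real).
      (\<forall>p\<in>phi_types U F R \<phi> m (a \<circ> j). (\<lambda>i. of_bool (p i)) \<longlonglongrightarrow> f p) \<and>
      variation_bounded U F R \<phi> m (a \<circ> j) N)"
proof -
  obtain K where K: "\<not> finite_order_property U F R \<phi> n m K"
    using stable_bounded_half_graphs[OF st fv] by blast
  define alternating where "alternating X \<longleftrightarrow> (\<exists>b. set b \<subseteq> U \<and> length b = m \<and>
    (\<forall>x\<in>X. holds U F R \<phi> (a x @ b) \<longleftrightarrow> even (card {y \<in> X. y < x})))" for X
  obtain h :: "nat \<Rightarrow> nat" where h: "strict_mono h"
    and homog: "(\<forall>X. finite X \<and> card X = 2 * K \<longrightarrow> alternating (h ` X)) \<or>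
      (\<forall>X. finite X \<and> card X = 2 * K \<longrightarrow> \<not> alternating (h ` X))"
    by (rule Ramsey_subsequence)
  have alternating_iff: "alternating (h ` g ` {..<2 * K}) \<longleftrightarrow> alternation_realized \<phi> m (a \<circ> h \<circ> g) (2 * K)"
    if g: "strict_mono g" for g :: "nat \<Rightarrow> nat"
  proof -
    have hg: "strict_mono (h \<circ> g)"
      using h g by (rule strict_mono_o)
    have "h ` g ` {..<2 * K} = (h \<circ> g) ` {..<2 * K}"
      by (simp add: image_comp)
    moreover have "card {y \<in> (h \<circ> g) ` {..<2 * K}. y < (h \<circ> g) r} = r" if "r < 2 * K" for r
      using card_strict_mono_image(2)[OF hg that] .
    ultimately show ?thesis
      unfolding alternating_def alternation_realized_def by auto
  qed
  have sets: "finite (g ` {..<2 * K}) \<and> card (g ` {..<2 * K}) = 2 * K"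
    if "strict_mono g" for g :: "nat \<Rightarrow> nat"
    using card_strict_mono_image(1)[OF that] by simp
  have ah: "\<forall>i. set ((a \<circ> h) i) \<subseteq> U \<and> length ((a \<circ> h) i) = n"
    using a by simp
  from homog consider
      "\<forall>g. strict_mono g \<longrightarrow> alternation_realized \<phi> m (a \<circ> h \<circ> g) (2 * K)"
    | "\<forall>g. strict_mono g \<longrightarrow> \<not> alternation_realized \<phi> m (a \<circ> h \<circ> g) (2 * K)"
    using alternating_iff sets by blast
  then show ?thesis
  proof cases
    case 1
    then have "finite_order_property U F R \<phi> n m K"
      by (rule finite_order_property_of_alternations[OF ah])
    with K show ?thesis
      by contradiction
  next
    case 2
    note changes = changes_bounded_without_alternation[where c = "a \<circ> h", OF 2]
    have limit: "(\<lambda>i. of_bool (p i) :: real) \<longlonglongrightarrow> lim (\<lambda>i. of_bool (p i))"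
      if "p \<in> phi_types U F R \<phi> m (a \<circ> h)" for p
      using bounded_changes_limit[OF fv ah _ that] changes by blast
    have var: "variation_bounded U F R \<phi> m (a \<circ> h) (2 * K)"
      unfolding variation_bounded_def
    proof (intro allI impI)
      fix b assume "set b \<subseteq> U \<and> length b = m"
      then have "finite {i. holds U F R \<phi> ((a \<circ> h) (Suc i) @ b) \<noteq> holds U F R \<phi> ((a \<circ> h) (Suc (Suc i)) @ b)}"
        and "card {i. holds U F R \<phi> ((a \<circ> h) (Suc i) @ b) \<noteq> holds U F R \<phi> ((a \<circ> h) (Suc (Suc i)) @ b)}
          \<le> 2 * K"
        using changes by blast+
      then show "summable (\<lambda>i. \<bar>of_bool (holds U F R \<phi> ((a \<circ> h) (Suc i) @ b))
          - of_bool (holds U F R \<phi> ((a \<circ> h) (Suc (Suc i)) @ b)) :: real\<bar>) \<and>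
        (\<Sum>i. \<bar>of_bool (holds U F R \<phi> ((a \<circ> h) (Suc i) @ b))
          - of_bool (holds U F R \<phi> ((a \<circ> h) (Suc (Suc i)) @ b)) :: real\<bar>) \<le> real (2 * K)"
        using finite_changes_variation[where w = "\<lambda>i. holds U F R \<phi> ((a \<circ> h) (Suc i) @ b)"]
        by (simp only: of_nat_le_iff)
    qed
    show ?thesis
      by (intro exI[of _ h] exI[of _ "2 * K"] exI[of _ "\<lambda>p. lim (\<lambda>i. of_bool (p i))"] conjI ballI)
        (use h limit var in auto)
  qed
qed

end

theorem corollary2p15:
  fixes U :: "'u set" and F :: "'f \<Rightarrow> 'u list \<Rightarrow> 'u" and R :: "'r \<Rightarrow> 'u list \<Rightarrow> bool"
    and T :: "('f, 'r) fm set"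
  assumes "complete_theory T" and "monster U F R T"
  shows "stable U F R \<longleftrightarrow>
    ((\<forall>\<phi> n m (a :: nat \<Rightarrow> 'u list).
        fv \<phi> \<subseteq> {..< n + m} \<and> (\<forall>i. set (a i) \<subseteq> U \<and> length (a i) = n) \<longrightarrow>
        (\<exists>j :: nat \<Rightarrow> nat. strict_mono j \<and>
          (\<exists>(N :: nat) (f :: (nat \<Rightarrow> bool) \<Rightarrow> real).
            (\<forall>p\<in>phi_types U F R \<phi> m (a \<circ> j). (\<lambda>i. of_bool (p i)) \<longlonglongrightarrow> f p) \<and>
            (\<forall>b. set b \<subseteq> U \<and> length b = m \<longrightarrow>
               summable (\<lambda>i. \<bar>of_bool (holds U F R \<phi> (a (j (Suc i)) @ b))
                             - of_bool (holds U F R \<phi> (a (j (Suc (Suc i))) @ b)) :: real\<bar>) \<and>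
               (\<Sum>i. \<bar>of_bool (holds U F R \<phi> (a (j (Suc i)) @ b))
                     - of_bool (holds U F R \<phi> (a (j (Suc (Suc i))) @ b)) :: real\<bar>) \<le> real N))))
     \<and>
     (\<forall>\<phi> n m (a :: nat \<Rightarrow> 'u list) (f :: (nat \<Rightarrow> bool) \<Rightarrow> real).
        fv \<phi> \<subseteq> {..< n + m} \<and> (\<forall>i. set (a i) \<subseteq> U \<and> length (a i) = n) \<and>
        (\<forall>p\<in>phi_types U F R \<phi> m a. (\<lambda>i. of_bool (p i)) \<longlonglongrightarrow> f p) \<and>
        (\<exists>N :: nat. \<forall>b. set b \<subseteq> U \<and> length b = m \<longrightarrow>
               summable (\<lambda>i. \<bar>of_bool (holds U F R \<phi> (a (Suc i) @ b))
                             - of_bool (holds U F R \<phi> (a (Suc (Suc i)) @ b)) :: real\<bar>) \<and>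
               (\<Sum>i. \<bar>of_bool (holds U F R \<phi> (a (Suc i) @ b))
                     - of_bool (holds U F R \<phi> (a (Suc (Suc i)) @ b)) :: real\<bar>) \<le> real N)
        \<longrightarrow> continuous_map (stone_top U F R \<phi> m a) euclideanreal f))"
    (is "_ \<longleftrightarrow> ?I \<and> ?II")
proof -
  interpret monster_model U F R T
    by (rule monster_model.intro) (fact assms(2))
  show ?thesis
  proof
    assume st: "stable U F R"
    show "?I \<and> ?II"
      apply (intro conjI allI impI; elim conjE)
      subgoal for \<phi> n m a
        using stable_convergent_subsequence[OF st, of \<phi> n m a] by (simp add: variation_bounded_def)
      subgoal
        by (rule stable_limit_continuous[OF st])
      done
  next
    assume "?I \<and> ?II"
    then have I: ?I and II: ?II
      by blast+
    show "stable U F R"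
      unfolding stable_def
    proof clarify
      fix \<phi> n m assume fv: "fv \<phi> \<subseteq> {..<n + m}" and op: "order_property U F R \<phi> n m"
      obtain a :: "nat \<Rightarrow> 'u list" where a: "\<forall>i. set (a i) \<subseteq> U \<and> length (a i) = n"
        and discontinuous: "\<And>j f. strict_mono j \<Longrightarrow>
          \<forall>p\<in>phi_types U F R \<phi> m (a \<circ> j). (\<lambda>i. of_bool (p i)) \<longlonglongrightarrow> f p \<Longrightarrow>
          \<not> continuous_map (stone_top U F R \<phi> m (a \<circ> j)) euclideanreal f"
        using order_property_discontinuous_limits[OF op] by blast
      obtain j :: "nat \<Rightarrow> nat" and N :: nat and f :: "(nat \<Rightarrow> bool) \<Rightarrow> real" where j: "strict_mono j"
        and conv: "\<forall>p\<in>phi_types U F R \<phi> m (a \<circ> j). (\<lambda>i. of_bool (p i)) \<longlonglongrightarrow> f p"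
        and "variation_bounded U F R \<phi> m (a \<circ> j) N"
        using I[rule_format, OF conjI[OF fv a]] unfolding variation_bounded_def comp_apply by blast
      then have "continuous_map (stone_top U F R \<phi> m (a \<circ> j)) euclideanreal f"
        using II[rule_format, of \<phi> n m "a \<circ> j" f] fv a unfolding variation_bounded_def by auto
      with discontinuous[OF j conv] show False ..
    qed
  qed
qed

end
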